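(* Let $d\in\mathbb N$, $\beta\in(1,\infty)$, and let the kernels $K_r,G^0_r,G^1_r,G^v_r$ be as defined in the context. There exists $C>0$ (independent of $r$) such that for every $r>0$, $$\operatorname{supp}K_r\cup\operatorname{supp}G^0_r\cup\operatorname{supp}G^1_r\cup\operatorname{supp}G^v_r\subset\{(s,y,w)\in\mathbb R^{1+2d}: -2r\le s\le -r,\ |y|\le Cr^\beta,\ |w|\le Cr^{\beta-1}\},$$ and, with implicit constants independent of $r>0$, $$|K_r|\lesssim r^{-\mathsf Q},\ |\nabla_yK_r|\lesssim r^{-\beta-\mathsf Q},\quad |G^0_r|\lesssim r^{1-\beta-\mathsf Q},\ |\nabla_yG^0_r|\lesssim r^{1-2\beta-\mathsf Q},$$ $$|G^1_r|\lesssim r^{-\mathsf Q},\ |\nabla_yG^1_r|\lesssim r^{-\beta-\mathsf Q},\quad |G^v_r|\lesssim r^{\beta-2-\mathsf Q},\ |\nabla_yG^v_r|\lesssim r^{-2-\mathsf Q},$$ where $\nabla_y$ denotes differentiation in the variable $y$.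
   Context: All $2\times2$ matrices act on $\mathbb R^{2d}=\mathbb R^d\times\mathbb R^d$ as their tensor product with $\mathrm{Id}_d$. Let $g_1(r)=r^\beta\sin\log r$, $g_2(r)=r^\beta\cos\log r$ for $r>0$, and $$\mathcal W(r)=\begin{pmatrix}g_1(r)&g_2(r)\\ \dot g_1(r)&\dot g_2(r)\end{pmatrix},\quad \mathcal D_\delta=\begin{pmatrix}\mathrm{Id}_d&0\\0&\delta\,\mathrm{Id}_d\end{pmatrix},\quad \mathcal A_{m_0}(r)=\mathcal D_{m_0}^{-1}\mathcal W(r)\ (m_0\neq0),$$ $$\mathcal F_{m_0}(r)=\bigl(m_0^{-1}\ddot g_1(r)\ \ m_0^{-1}\ddot g_2(r)\bigr)\in\mathbb R^{d\times2d}.$$ Let $c_0:=(-1)^d$ (so that $\det\mathcal W(r)=c_0r^{(2\beta-1)d}$) and $\mathsf Q:=(2\beta-1)d+1$. Fix a nonnegative $\psi\in C_c^\infty(\mathbb R^{1+2d})$ with unit mass and $\operatorname{supp}\psi\subset(-2,-1)\times B_1(0)\times B_1(0)$; write $\nabla_{x,v}\psi$ for its gradient in the last $2d$ variables. For $r>0$ and $(s,y,w)\in\mathbb R^{1+2d}$ (all kernels set to $0$ when $s=0$), with $M:=\mathcal A_{s/r}(r)^{-1}$ and $M_{\cdot;2}$ its second block column ($2d\times d$): $$K_r(s,y,w)=c_0^{-1}r^{-\mathsf Q}(s/r)^d\,\psi\bigl(s/r,M(y,w)\bigr),$$ $$G^0_r(s,y,w)=c_0^{-1}(s/r)^{d+1}r^{-\mathsf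 Q}\,[\nabla_{x,v}\psi]^T\bigl(s/r,M(y,w)\bigr)\,M_{\cdot;2},$$ $$G^1_r(s,y,w)=-c_0^{-1}(s/r)^{d+1}r^{-\mathsf Q}\,\psi\bigl(s/r,M(y,w)\bigr),$$ $$G^v_r(s,y,w)=-c_0^{-1}(s/r)^{d}r^{-\mathsf Q}\,\psi\bigl(s/r,M(y,w)\bigr)\,\mathcal F_{s/r}(r)\,M(y,w).$$ *)

theory Defs
  imports "HOL-Analysis.Analysis"
begin

inductive iter_dderiv :: "('a::real_normed_vector \<Rightarrow> 'b::real_normed_vector) \<Rightarrow> ('a \<Rightarrow> 'b) \<Rightarrow> bool"
  for f where
  base: "iter_dderiv f f"
| step: "iter_dderiv f g \<Longrightarrow> iter_dderiv f (\<lambda>x. frechet_derivative g (at x) v)"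

text \<open>A function is smooth if all iterated directional derivatives exist everywhere
  (as Frechet derivatives) and are continuous; on finite-dimensional spaces this is C-infinity.\<close>
definition smooth_fun :: "('a::real_normed_vector \<Rightarrow> 'b::real_normed_vector) \<Rightarrow> bool" where
  "smooth_fun f \<longleftrightarrow> (\<forall>g. iter_dderiv f g \<longrightarrow> (\<forall>x. g differentiable (at x)) \<and> continuous_on UNIV g)"

definition g1 :: "real \<Rightarrow> real \<Rightarrow> real" where "g1 \<beta> r = r powr \<beta> * sin (ln r)"
definition g2 :: "real \<Rightarrow> real \<Rightarrow> real" where "g2 \<beta> r = r powr \<beta> * cos (ln r)"

text \<open>2x2 scalar matrices; they act on R^d x R^d via tensor product with Id_d.\<close>
definition mat2 :: "real \<Rightarrow> real \<Rightarrow> real \<Rightarrow> real \<Rightarrow> real^2^2" where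
  "mat2 a b c e = (\<chi> i j. if i = 1 then (if j = 1 then a else b) else (if j = 1 then c else e))"

definition blk_act :: "real^2^2 \<Rightarrow> ((real^'d) \<times> (real^'d)) \<Rightarrow> ((real^'d) \<times> (real^'d))" where
  "blk_act P z = ((P$1$1) *\<^sub>R fst z + (P$1$2) *\<^sub>R snd z, (P$2$1) *\<^sub>R fst z + (P$2$2) *\<^sub>R snd z)"

definition Wmat :: "real \<Rightarrow> real \<Rightarrow> real^2^2" where
  "Wmat \<beta> r = mat2 (g1 \<beta> r) (g2 \<beta> r) (deriv (g1 \<beta>) r) (deriv (g2 \<beta>) r)"

definition Dmat :: "real \<Rightarrow> real^2^2" where
  "Dmat \<delta> = mat2 1 0 0 \<delta>"

definition Amat :: "real \<Rightarrow> real \<Rightarrow> real \<Rightarrow> real^2^2" where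
  "Amat \<beta> m0 r = matrix_inv (Dmat m0) ** Wmat \<beta> r"

definition Fop :: "real \<Rightarrow> real \<Rightarrow> real \<Rightarrow> ((real^'d) \<times> (real^'d)) \<Rightarrow> real^'d" where
  "Fop \<beta> m0 r z = (inverse m0 * deriv (deriv (g1 \<beta>)) r) *\<^sub>R fst z
                 + (inverse m0 * deriv (deriv (g2 \<beta>)) r) *\<^sub>R snd z"

definition c0 :: "'d::finite itself \<Rightarrow> real" where "c0 _ = (-1) ^ CARD('d)"

definition Qexp :: "'d::finite itself \<Rightarrow> real \<Rightarrow> real" where
  "Qexp _ \<beta> = (2*\<beta> - 1) * real CARD('d) + 1"

definition Mop :: "real \<Rightarrow> real \<Rightarrow> real \<Rightarrow> ((real^'d) \<times> (real^'d)) \<Rightarrow> ((real^'d) \<times> (real^'d))" where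
  "Mop \<beta> r s = blk_act (matrix_inv (Amat \<beta> (s/r) r))"

definition Kker :: "real \<Rightarrow> (real \<times> ((real^'d) \<times> (real^'d)) \<Rightarrow> real) \<Rightarrow> real \<Rightarrow> real \<Rightarrow> real^'d \<Rightarrow> real^'d \<Rightarrow> real" where
  "Kker \<beta> \<psi> r s y w = (if s = 0 then 0 else
     inverse (c0 TYPE('d)) * r powr (- Qexp TYPE('d) \<beta>) * (s/r) ^ CARD('d)
       * \<psi> (s/r, Mop \<beta> r s (y, w)))"

text \<open>[grad_{x,v} psi]^T(s/r, M(y,w)) M_{.;2}: the j-th entry is the derivative of psi in the
  (x,v)-variables at M(y,w) applied to the j-th column of the second block column of M,
  i.e. to M(0, e_j).\<close>
definition G0ker :: "real \<Rightarrow> (real \<times> ((real^'d) \<times> (real^'d)) \<Rightarrow> real) \<Rightarrow> real \<Rightarrow> real \<Rightarrow> real^'d \<Rightarrow> real^'d \<Rightarrow> real^'d" where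
  "G0ker \<beta> \<psi> r s y w = (if s = 0 then 0 else
     (inverse (c0 TYPE('d)) * (s/r) ^ (CARD('d) + 1) * r powr (- Qexp TYPE('d) \<beta>)) *\<^sub>R
       (\<chi> j. frechet_derivative (\<lambda>q. \<psi> (s/r, q)) (at (Mop \<beta> r s (y, w)))
               (Mop \<beta> r s (0, axis j 1))))"

definition G1ker :: "real \<Rightarrow> (real \<times> ((real^'d) \<times> (real^'d)) \<Rightarrow> real) \<Rightarrow> real \<Rightarrow> real \<Rightarrow> real^'d \<Rightarrow> real^'d \<Rightarrow> real" where
  "G1ker \<beta> \<psi> r s y w = (if s = 0 then 0 else
     - inverse (c0 TYPE('d)) * (s/r) ^ (CARD('d) + 1) * r powr (- Qexp TYPE('d) \<beta>)
       * \<psi> (s/r, Mop \<beta> r s (y, w)))"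

definition Gvker :: "real \<Rightarrow> (real \<times> ((real^'d) \<times> (real^'d)) \<Rightarrow> real) \<Rightarrow> real \<Rightarrow> real \<Rightarrow> real^'d \<Rightarrow> real^'d \<Rightarrow> real^'d" where
  "Gvker \<beta> \<psi> r s y w = (if s = 0 then 0 else
     (- inverse (c0 TYPE('d)) * (s/r) ^ CARD('d) * r powr (- Qexp TYPE('d) \<beta>)
       * \<psi> (s/r, Mop \<beta> r s (y, w))) *\<^sub>R Fop \<beta> (s/r) r (Mop \<beta> r s (y, w)))"

definition ksupp :: "(real \<Rightarrow> real^'d \<Rightarrow> real^'d \<Rightarrow> 'b::zero) \<Rightarrow> (real \<times> (real^'d) \<times> (real^'d)) set" where
  "ksupp k = closure {(s, y, w). k s y w \<noteq> 0}"

definition grad_y_bound :: "(real \<Rightarrow> real^'d \<Rightarrow> real^'d \<Rightarrow> 'b::real_normed_vector) \<Rightarrow> real \<Rightarrow> bool" where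
  "grad_y_bound k B \<longleftrightarrow> (\<forall>s y w. \<exists>D. ((\<lambda>y'. k s y' w) has_derivative D) (at y) \<and> onorm D \<le> B)"

end

theory Submission
  imports Defs
begin

text \<open>
  Fix r > 0 and s /= 0, and put t = s/r. The matrix A_t(r) has determinant -r^(2 beta - 1)/t, so
  M = A_t(r)^(-1) is explicit: y enters M(y,w) through r^(-beta) times a bounded matrix, and w
  through t r^(1 - beta) (cos (ln r), -sin (ln r)). Consequently each of the four kernels has the
  form c(s) Phi(s/r, M(y,w)), where the profile Phi is built from psi and its first derivatives
  (a C^1 function with bounded value and derivative, vanishing outside (-2,-1) x B_1 x B_1) and
  the coefficient c(s) is a power of r times a bounded function of s/r on (-2,-1).
  If (s/r, M(y,w)) lies in that box, then (y,w) = A_t(r) (x,v) with |x|, |v| < 1, which gives the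
  support; the sup bounds are |c| sup |Phi|; and the y-gradient bounds follow from the chain rule,
  because the derivative of y |-> M(y,w) has norm O(r^(-beta)). The bounds on psi and its first
  two derivatives hold because all iterated derivatives of a smooth compactly supported function
  are continuous and compactly supported.
\<close>

section \<open>Two-by-two matrices\<close>

lemma mat2_nth [simp]:
  "mat2 a b c e $ 1 $ 1 = a" "mat2 a b c e $ 1 $ 2 = b"
  "mat2 a b c e $ 2 $ 1 = c" "mat2 a b c e $ 2 $ 2 = e"
  by (simp_all add: mat2_def)

lemma mat2_mult:
  "mat2 a b c e ** mat2 a' b' c' e' = mat2 (a*a' + b*c') (a*b' + b*e') (c*a' + e*c') (c*b' + e*e')"
  by (simp add: vec_eq_iff forall_2 matrix_matrix_mult_def sum_2 mat2_def)

lemma mat2_eq_iff: "mat2 a b c e = mat2 a' b' c' e' \<longleftrightarrow> a = a' \<and> b = b' \<and> c = c' \<and> e = e'"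
  by (metis mat2_nth)

lemma mat_1_eq_mat2: "mat 1 = mat2 1 0 0 1"
  by (simp add: vec_eq_iff forall_2 mat_def mat2_def)

lemma invertible_matrix_inv:
  assumes "invertible A"
  shows "A ** matrix_inv A = mat 1" "matrix_inv A ** A = mat 1"
proof -
  have "A ** matrix_inv A = mat 1 \<and> matrix_inv A ** A = mat 1"
    using assms unfolding invertible_def matrix_inv_def by (rule someI_ex)
  then show "A ** matrix_inv A = mat 1" "matrix_inv A ** A = mat 1"
    by simp_all
qed

lemma matrix_inv_unique:
  fixes A B :: "'a::semiring_1^'n^'n"
  assumes "A ** B = mat 1" "B ** A = mat 1"
  shows "matrix_inv A = B"
proof -
  have inv: "matrix_inv A ** A = mat 1"
    using assms by (intro invertible_matrix_inv) (auto simp: invertible_def)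
  have "matrix_inv A = matrix_inv A ** (A ** B)"
    using assms by (simp add: matrix_mul_rid)
  also have "\<dots> = B"
    using inv by (simp add: matrix_mul_assoc matrix_mul_lid)
  finally show ?thesis .
qed

lemma matrix_inv_mat2:
  assumes "a*e - b*c \<noteq> 0"
  shows "matrix_inv (mat2 a b c e) =
    mat2 (e / (a*e - b*c)) (- b / (a*e - b*c)) (- c / (a*e - b*c)) (a / (a*e - b*c))"
proof -
  define D where "D = a*e - b*c"
  have "D \<noteq> 0"
    using assms by (simp add: D_def)
  then have "mat2 a b c e ** mat2 (e / D) (- b / D) (- c / D) (a / D) = mat 1"
    "mat2 (e / D) (- b / D) (- c / D) (a / D) ** mat2 a b c e = mat 1"
    using D_def by (simp_all add: mat2_mult mat_1_eq_mat2 mat2_eq_iff field_simps)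
  then show ?thesis
    unfolding D_def by (rule matrix_inv_unique)
qed

lemma blk_act_mat2: "blk_act (mat2 a b c e) (x, v) = (a *\<^sub>R x + b *\<^sub>R v, c *\<^sub>R x + e *\<^sub>R v)"
  by (simp add: blk_act_def)

lemma blk_act_mult: "blk_act (P ** Q) z = blk_act P (blk_act Q z)"
  by (simp add: blk_act_def matrix_matrix_mult_def sum_2 algebra_simps)

lemma blk_act_mat_1: "blk_act (mat 1) z = z"
  by (simp add: blk_act_def mat_def)

section \<open>The functions \<open>r powr \<gamma> * (u * sin (ln r) + v * cos (ln r))\<close>\<close>

definition log_osc :: "real \<Rightarrow> real \<Rightarrow> real \<Rightarrow> real \<Rightarrow> real" where
  "log_osc \<gamma> u v r = r powr \<gamma> * (u * sin (ln r) + v * cos (ln r))"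

lemma g1_eq_log_osc: "g1 \<beta> = log_osc \<beta> 1 0"
  by (simp add: fun_eq_iff g1_def log_osc_def)

lemma g2_eq_log_osc: "g2 \<beta> = log_osc \<beta> 0 1"
  by (simp add: fun_eq_iff g2_def log_osc_def)

lemma has_real_derivative_log_osc:
  assumes "r > 0"
  shows "(log_osc \<gamma> u v has_real_derivative log_osc (\<gamma> - 1) (\<gamma> * u - v) (u + \<gamma> * v) r) (at r)"
  unfolding log_osc_def[abs_def] using assms
  by (auto intro!: derivative_eq_intros simp: powr_diff field_simps)

lemma deriv_log_osc:
  "r > 0 \<Longrightarrow> deriv (log_osc \<gamma> u v) r = log_osc (\<gamma> - 1) (\<gamma> * u - v) (u + \<gamma> * v) r"
  by (rule DERIV_imp_deriv[OF has_real_derivative_log_osc])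

lemma deriv_deriv_log_osc:
  assumes "r > 0"
  shows "deriv (deriv (log_osc \<gamma> u v)) r =
    log_osc (\<gamma> - 2) ((\<gamma> - 1) * (\<gamma> * u - v) - (u + \<gamma> * v)) ((\<gamma> * u - v) + (\<gamma> - 1) * (u + \<gamma> * v)) r"
proof -
  have "eventually (\<lambda>x. deriv (log_osc \<gamma> u v) x = log_osc (\<gamma> - 1) (\<gamma> * u - v) (u + \<gamma> * v) x) (nhds r)"
    using eventually_nhds_in_open[of "{0<..}" r] assms
    by (auto elim!: eventually_mono simp: deriv_log_osc)
  then have "deriv (deriv (log_osc \<gamma> u v)) r = deriv (log_osc (\<gamma> - 1) (\<gamma> * u - v) (u + \<gamma> * v)) r"
    by (rule deriv_cong_ev) simp
  then show ?thesis
    using assms by (simp add: deriv_log_osc diff_diff_eq)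
qed

lemma abs_log_osc_le: "r > 0 \<Longrightarrow> \<bar>log_osc \<gamma> u v r\<bar> \<le> (\<bar>u\<bar> + \<bar>v\<bar>) * r powr \<gamma>"
proof -
  have "\<bar>u * sin (ln r) + v * cos (ln r)\<bar> \<le> \<bar>u\<bar> + \<bar>v\<bar>"
    using abs_sin_le_one[of "ln r"] abs_cos_le_one[of "ln r"]
    by (auto simp: abs_mult intro!: order_trans[OF abs_triangle_ineq] add_mono mult_left_le)
  then show "\<bar>log_osc \<gamma> u v r\<bar> \<le> (\<bar>u\<bar> + \<bar>v\<bar>) * r powr \<gamma>"
    by (simp add: log_osc_def abs_mult mult.commute mult_left_mono)
qed

lemma log_osc_coeff_le:
  fixes \<gamma> u v :: real
  shows "\<bar>\<gamma> * u - v\<bar> + \<bar>u + \<gamma> * v\<bar> \<le> (\<bar>\<gamma>\<bar> + 1) * (\<bar>u\<bar> + \<bar>v\<bar>)"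
  using abs_triangle_ineq4[of "\<gamma> * u" v] abs_triangle_ineq[of u "\<gamma> * v"]
  by (simp add: abs_mult algebra_simps)

lemma abs_deriv_deriv_log_osc_le:
  assumes "r > 0"
  shows "\<bar>deriv (deriv (log_osc \<gamma> u v)) r\<bar>
    \<le> (\<bar>\<gamma>\<bar> + 1) * (\<bar>\<gamma> - 1\<bar> + 1) * (\<bar>u\<bar> + \<bar>v\<bar>) * r powr (\<gamma> - 2)"
proof -
  let ?u = "\<gamma> * u - v" and ?v = "u + \<gamma> * v"
  have "\<bar>deriv (deriv (log_osc \<gamma> u v)) r\<bar>
      \<le> (\<bar>(\<gamma> - 1) * ?u - ?v\<bar> + \<bar>?u + (\<gamma> - 1) * ?v\<bar>) * r powr (\<gamma> - 2)"
    unfolding deriv_deriv_log_osc[OF assms] by (rule abs_log_osc_le[OF assms])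
  also have "\<dots> \<le> (\<bar>\<gamma> - 1\<bar> + 1) * (\<bar>?u\<bar> + \<bar>?v\<bar>) * r powr (\<gamma> - 2)"
    by (intro mult_right_mono log_osc_coeff_le) simp
  also have "\<dots> \<le> (\<bar>\<gamma> - 1\<bar> + 1) * ((\<bar>\<gamma>\<bar> + 1) * (\<bar>u\<bar> + \<bar>v\<bar>)) * r powr (\<gamma> - 2)"
    by (intro mult_right_mono mult_left_mono log_osc_coeff_le) simp_all
  finally show ?thesis
    by (simp add: mult_ac)
qed

lemma abs_deriv_deriv_g_le:
  assumes "r > 0"
  shows "\<bar>r powr (2 - \<beta>) * deriv (deriv (g1 \<beta>)) r\<bar> \<le> (\<bar>\<beta>\<bar> + 1) * (\<bar>\<beta> - 1\<bar> + 1)"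
    and "\<bar>r powr (2 - \<beta>) * deriv (deriv (g2 \<beta>)) r\<bar> \<le> (\<bar>\<beta>\<bar> + 1) * (\<bar>\<beta> - 1\<bar> + 1)"
proof -
  have normalized: "\<bar>r powr (2 - \<beta>) * deriv (deriv (log_osc \<beta> u v)) r\<bar>
      \<le> (\<bar>\<beta>\<bar> + 1) * (\<bar>\<beta> - 1\<bar> + 1) * (\<bar>u\<bar> + \<bar>v\<bar>)" for u v
  proof -
    have "\<bar>r powr (2 - \<beta>) * deriv (deriv (log_osc \<beta> u v)) r\<bar>
        = r powr (2 - \<beta>) * \<bar>deriv (deriv (log_osc \<beta> u v)) r\<bar>"
      by (simp add: abs_mult)
    also have "\<dots> \<le> r powr (2 - \<beta>) * ((\<bar>\<beta>\<bar> + 1) * (\<bar>\<beta> - 1\<bar> + 1) * (\<bar>u\<bar> + \<bar>v\<bar>) * r powr (\<beta> - 2))"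
      by (rule mult_left_mono[OF abs_deriv_deriv_log_osc_le[OF assms]]) simp
    also have "\<dots> = (\<bar>\<beta>\<bar> + 1) * (\<bar>\<beta> - 1\<bar> + 1) * (\<bar>u\<bar> + \<bar>v\<bar>) * (r powr (2 - \<beta>) * r powr (\<beta> - 2))"
      by (simp only: mult_ac)
    also have "r powr (2 - \<beta>) * r powr (\<beta> - 2) = 1"
      using assms by (simp add: powr_add[symmetric])
    finally show ?thesis
      by simp
  qed
  show "\<bar>r powr (2 - \<beta>) * deriv (deriv (g1 \<beta>)) r\<bar> \<le> (\<bar>\<beta>\<bar> + 1) * (\<bar>\<beta> - 1\<bar> + 1)"
    "\<bar>r powr (2 - \<beta>) * deriv (deriv (g2 \<beta>)) r\<bar> \<le> (\<bar>\<beta>\<bar> + 1) * (\<bar>\<beta> - 1\<bar> + 1)"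
    using normalized[of 1 0] normalized[of 0 1] by (simp_all add: g1_eq_log_osc g2_eq_log_osc)
qed

section \<open>The matrix \<open>A\<close> and its inverse \<open>M\<close>\<close>

lemma Amat_eq:
  assumes "r > 0" "t \<noteq> 0"
  shows "Amat \<beta> t r = mat2 (log_osc \<beta> 1 0 r) (log_osc \<beta> 0 1 r)
    (log_osc (\<beta> - 1) \<beta> 1 r / t) (log_osc (\<beta> - 1) (-1) \<beta> r / t)"
proof -
  have "matrix_inv (Dmat t) = mat2 1 0 0 (1 / t)"
    using assms(2) by (simp add: Dmat_def matrix_inv_mat2)
  then show ?thesis
    using assms(1)
    by (simp add: Amat_def Wmat_def mat2_mult g1_eq_log_osc g2_eq_log_osc deriv_log_osc)
qed

lemma det_Amat:
  assumes "r > 0" "t \<noteq> 0"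
  shows "det (Amat \<beta> t r) = - (r powr \<beta> * r powr (\<beta> - 1)) / t"
proof -
  have "cos (ln r) * cos (ln r) = 1 - sin (ln r) * sin (ln r)"
    by (simp add: cos_squared_eq[unfolded power2_eq_square])
  then show ?thesis
    using assms(2) unfolding det_2 Amat_eq[OF assms] mat2_nth log_osc_def
    by (simp add: divide_simps) algebra
qed

lemma Mop_eq:
  assumes "r > 0" "s \<noteq> 0"
  shows "Mop \<beta> r s (y, w) =
    (log_osc (- \<beta>) 1 (- \<beta>) r *\<^sub>R y + log_osc (1 - \<beta>) 0 (s/r) r *\<^sub>R w,
     log_osc (- \<beta>) \<beta> 1 r *\<^sub>R y + log_osc (1 - \<beta>) (- (s/r)) 0 r *\<^sub>R w)"
proof -
  have t: "s/r \<noteq> 0"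
    using assms by simp
  have pos: "r powr \<beta> > 0" "r powr (\<beta> - 1) > 0"
    using assms(1) by simp_all
  have inv_powr: "r powr (- \<beta>) = 1 / r powr \<beta>" "r powr (1 - \<beta>) = 1 / r powr (\<beta> - 1)"
    using powr_minus_divide[of r \<beta>] powr_minus_divide[of r "\<beta> - 1"] by simp_all
  have det: "log_osc \<beta> 1 0 r * (log_osc (\<beta> - 1) (-1) \<beta> r / (s/r))
      - log_osc \<beta> 0 1 r * (log_osc (\<beta> - 1) \<beta> 1 r / (s/r)) = - (r powr \<beta> * r powr (\<beta> - 1)) / (s/r)"
    using det_Amat[OF assms(1) t, of \<beta>] by (simp only: det_2 Amat_eq[OF assms(1) t] mat2_nth)
  then have det_nonzero: "log_osc \<beta> 1 0 r * (log_osc (\<beta> - 1) (-1) \<beta> r / (s/r))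
      - log_osc \<beta> 0 1 r * (log_osc (\<beta> - 1) \<beta> 1 r / (s/r)) \<noteq> 0"
    using t pos by simp
  have "matrix_inv (Amat \<beta> (s/r) r) = mat2 (log_osc (- \<beta>) 1 (- \<beta>) r) (log_osc (1 - \<beta>) 0 (s/r) r)
    (log_osc (- \<beta>) \<beta> 1 r) (log_osc (1 - \<beta>) (- (s/r)) 0 r)"
    unfolding Amat_eq[OF assms(1) t] matrix_inv_mat2[OF det_nonzero] det
    using t pos by (simp add: mat2_eq_iff log_osc_def inv_powr field_simps)
  then show ?thesis
    by (simp add: Mop_def blk_act_mat2)
qed

lemma blk_act_Amat_Mop:
  assumes "r > 0" "s \<noteq> 0"
  shows "blk_act (Amat \<beta> (s/r) r) (Mop \<beta> r s z) = z"
proof -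
  have t: "s/r \<noteq> 0"
    using assms by simp
  then have "det (Amat \<beta> (s/r) r) \<noteq> 0"
    using assms(1) by (simp add: det_Amat)
  then have "Amat \<beta> (s/r) r ** matrix_inv (Amat \<beta> (s/r) r) = mat 1"
    by (simp add: invertible_matrix_inv invertible_det_nz)
  then show ?thesis
    by (simp add: Mop_def flip: blk_act_mult add: blk_act_mat_1)
qed

lemma norm_scaleR_add_le:
  fixes x v :: "'a::real_normed_vector"
  assumes "norm x \<le> 1" "norm v \<le> 1"
  shows "norm (a *\<^sub>R x + b *\<^sub>R v) \<le> \<bar>a\<bar> + \<bar>b\<bar>"
proof -
  have "norm (a *\<^sub>R x + b *\<^sub>R v) \<le> \<bar>a\<bar> * norm x + \<bar>b\<bar> * norm v"
    using norm_triangle_ineq[of "a *\<^sub>R x" "b *\<^sub>R v"] by simp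
  also have "\<dots> \<le> \<bar>a\<bar> + \<bar>b\<bar>"
    using assms by (intro add_mono mult_left_le) auto
  finally show ?thesis .
qed

lemma Mop_preimage_bound:
  assumes "r > 0" "1 \<le> \<bar>s/r\<bar>"
    and "norm (fst (Mop \<beta> r s (y, w))) \<le> 1" "norm (snd (Mop \<beta> r s (y, w))) \<le> 1"
  shows "norm y \<le> 2 * (\<bar>\<beta>\<bar> + 1) * r powr \<beta>" "norm w \<le> 2 * (\<bar>\<beta>\<bar> + 1) * r powr (\<beta> - 1)"
proof -
  obtain x v where xv: "Mop \<beta> r s (y, w) = (x, v)"
    by fastforce
  have t: "s/r \<noteq> 0" "s \<noteq> 0"
    using assms(2) by auto
  have "(y, w) = blk_act (Amat \<beta> (s/r) r) (x, v)"
    using blk_act_Amat_Mop[OF assms(1) t(2), of \<beta> "(y, w)"] xv by simp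
  then have y: "y = log_osc \<beta> 1 0 r *\<^sub>R x + log_osc \<beta> 0 1 r *\<^sub>R v"
    and w: "w = (log_osc (\<beta> - 1) \<beta> 1 r / (s/r)) *\<^sub>R x + (log_osc (\<beta> - 1) (-1) \<beta> r / (s/r)) *\<^sub>R v"
    by (simp_all add: Amat_eq[OF assms(1) t(1)] blk_act_mat2)
  have xv_le: "norm x \<le> 1" "norm v \<le> 1"
    using assms(3,4) xv by simp_all
  have "norm y \<le> \<bar>log_osc \<beta> 1 0 r\<bar> + \<bar>log_osc \<beta> 0 1 r\<bar>"
    unfolding y using xv_le by (rule norm_scaleR_add_le)
  also have "\<dots> \<le> r powr \<beta> + r powr \<beta>"
    using abs_log_osc_le[OF assms(1), of \<beta> 1 0] abs_log_osc_le[OF assms(1), of \<beta> 0 1]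
    by simp
  also have "\<dots> \<le> 2 * (\<bar>\<beta>\<bar> + 1) * r powr \<beta>"
    by (simp add: field_simps)
  finally show "norm y \<le> 2 * (\<bar>\<beta>\<bar> + 1) * r powr \<beta>" .
  have div_le: "\<bar>a / (s/r)\<bar> \<le> \<bar>a\<bar>" for a
    using divide_left_mono[OF assms(2) abs_ge_zero[of a]] assms(2) by (simp add: abs_divide abs_mult)
  have "norm w \<le> \<bar>log_osc (\<beta> - 1) \<beta> 1 r / (s/r)\<bar> + \<bar>log_osc (\<beta> - 1) (-1) \<beta> r / (s/r)\<bar>"
    unfolding w using xv_le by (rule norm_scaleR_add_le)
  also have "\<dots> \<le> (\<bar>\<beta>\<bar> + 1) * r powr (\<beta> - 1) + (\<bar>\<beta>\<bar> + 1) * r powr (\<beta> - 1)"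
    using abs_log_osc_le[OF assms(1), of "\<beta> - 1" \<beta> 1] abs_log_osc_le[OF assms(1), of "\<beta> - 1" "-1" \<beta>]
    by (intro add_mono order_trans[OF div_le]) (simp_all add: add.commute)
  finally show "norm w \<le> 2 * (\<bar>\<beta>\<bar> + 1) * r powr (\<beta> - 1)"
    by (simp add: algebra_simps)
qed

lemma has_derivative_Mop_fst: "((\<lambda>y. Mop \<beta> r s (y, w)) has_derivative (\<lambda>h. Mop \<beta> r s (h, 0))) (at y)"
  unfolding Mop_def blk_act_def by (auto intro!: derivative_eq_intros)

lemma norm_Mop_fst_le:
  assumes "r > 0" "s \<noteq> 0"
  shows "norm (Mop \<beta> r s (h, 0)) \<le> 2 * (\<bar>\<beta>\<bar> + 1) * r powr (- \<beta>) * norm h"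
proof -
  have "norm (Mop \<beta> r s (h, 0))
      \<le> \<bar>log_osc (- \<beta>) 1 (- \<beta>) r\<bar> * norm h + \<bar>log_osc (- \<beta>) \<beta> 1 r\<bar> * norm h"
    using norm_Pair_le[of "log_osc (- \<beta>) 1 (- \<beta>) r *\<^sub>R h" "log_osc (- \<beta>) \<beta> 1 r *\<^sub>R h"]
    by (simp add: Mop_eq[OF assms])
  also have "\<dots> \<le> (\<bar>\<beta>\<bar> + 1) * r powr (- \<beta>) * norm h + (\<bar>\<beta>\<bar> + 1) * r powr (- \<beta>) * norm h"
    using abs_log_osc_le[OF assms(1), of "- \<beta>" 1 "- \<beta>"] abs_log_osc_le[OF assms(1), of "- \<beta>" \<beta> 1]
    by (intro add_mono mult_right_mono) (simp_all add: add.commute)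
  finally show ?thesis
    by (simp add: algebra_simps)
qed

lemma Mop_snd:
  assumes "r > 0" "s \<noteq> 0"
  shows "Mop \<beta> r s (0, v) = (s/r * r powr (1 - \<beta>)) *\<^sub>R (cos (ln r) *\<^sub>R v, - sin (ln r) *\<^sub>R v)"
  by (simp add: Mop_eq[OF assms] log_osc_def)

section \<open>Kernels of the form \<open>c(s) \<Phi>(s/r, M(y,w))\<close>\<close>

definition Mop_kernel ::
    "real \<Rightarrow> real \<Rightarrow> (real \<Rightarrow> real) \<Rightarrow> (real \<times> ((real^'d) \<times> (real^'d)) \<Rightarrow> 'b::real_normed_vector)
      \<Rightarrow> real \<Rightarrow> real^'d \<Rightarrow> real^'d \<Rightarrow> 'b" where
  "Mop_kernel \<beta> r c \<Phi> s y w = (if s = 0 then 0 else c s *\<^sub>R \<Phi> (s/r, Mop \<beta> r s (y, w)))"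

lemma ksupp_Mop_kernel:
  fixes \<Phi> :: "real \<times> ((real^'d) \<times> (real^'d)) \<Rightarrow> 'b::real_normed_vector"
  assumes "r > 0" and box: "{z. \<Phi> z \<noteq> 0} \<subseteq> {-2<..<-1} \<times> (ball 0 1 \<times> ball 0 1)"
    and "2 * (\<bar>\<beta>\<bar> + 1) \<le> C"
  shows "ksupp (Mop_kernel \<beta> r c \<Phi>)
    \<subseteq> {(s, y, w). -2*r \<le> s \<and> s \<le> -r \<and> norm y \<le> C * r powr \<beta> \<and> norm w \<le> C * r powr (\<beta> - 1)}"
    (is "_ \<subseteq> ?T")
proof -
  have "?T = {z. -2*r \<le> fst z \<and> fst z \<le> -r \<and> norm (fst (snd z)) \<le> C * r powr \<beta>
      \<and> norm (snd (snd z)) \<le> C * r powr (\<beta> - 1)}"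
    by auto
  then have "closed ?T"
    by (simp only:) (intro closed_Collect_conj closed_Collect_le continuous_intros)
  moreover have "{(s, y, w). Mop_kernel \<beta> r c \<Phi> s y w \<noteq> 0} \<subseteq> ?T"
  proof clarify
    fix s y w
    assume "Mop_kernel \<beta> r c \<Phi> s y w \<noteq> 0"
    then have "s \<noteq> 0" "\<Phi> (s/r, Mop \<beta> r s (y, w)) \<noteq> 0"
      by (auto simp: Mop_kernel_def split: if_splits)
    then have "-2 < s/r" "s/r < -1" "norm (fst (Mop \<beta> r s (y, w))) \<le> 1"
      "norm (snd (Mop \<beta> r s (y, w))) \<le> 1"
      using box by (auto simp: mem_Times_iff)
    moreover have "2 * (\<bar>\<beta>\<bar> + 1) * r powr \<beta> \<le> C * r powr \<beta>"
      "2 * (\<bar>\<beta>\<bar> + 1) * r powr (\<beta> - 1) \<le> C * r powr (\<beta> - 1)"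
      using assms(3) by (simp_all add: mult_right_mono)
    ultimately show "-2*r \<le> s \<and> s \<le> -r \<and> norm y \<le> C * r powr \<beta> \<and> norm w \<le> C * r powr (\<beta> - 1)"
      using Mop_preimage_bound[OF assms(1), of s \<beta> y w] assms(1)
      by (auto simp: field_simps)
  qed
  ultimately show ?thesis
    unfolding ksupp_def by (rule closure_minimal[rotated])
qed

lemma norm_Mop_kernel_le:
  fixes \<Phi> :: "real \<times> ((real^'d) \<times> (real^'d)) \<Rightarrow> 'b::real_normed_vector"
  assumes box: "{z. \<Phi> z \<noteq> 0} \<subseteq> {-2<..<-1} \<times> (ball 0 1 \<times> ball 0 1)"
    and bound: "\<And>z. norm (\<Phi> z) \<le> A0"
    and coeff: "\<And>s. -2 < s/r \<Longrightarrow> s/r < -1 \<Longrightarrow> \<bar>c s\<bar> \<le> Kc" and "0 \<le> Kc"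
  shows "norm (Mop_kernel \<beta> r c \<Phi> s y w) \<le> Kc * A0"
proof (cases "s \<noteq> 0 \<and> \<Phi> (s/r, Mop \<beta> r s (y, w)) \<noteq> 0")
  case True
  then have "-2 < s/r" "s/r < -1"
    using box by auto
  then have "\<bar>c s\<bar> * norm (\<Phi> (s/r, Mop \<beta> r s (y, w))) \<le> Kc * A0"
    using coeff \<open>0 \<le> Kc\<close> bound by (intro mult_mono) auto
  then show ?thesis
    using True by (simp add: Mop_kernel_def)
next
  case False
  then show ?thesis
    using \<open>0 \<le> Kc\<close> order_trans[OF norm_ge_zero bound] by (auto simp: Mop_kernel_def)
qed

lemma grad_y_bound_Mop_kernel:
  fixes \<Phi> :: "real \<times> ((real^'d) \<times> (real^'d)) \<Rightarrow> 'b::real_normed_vector"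
  assumes "r > 0" and box: "{z. \<Phi> z \<noteq> 0} \<subseteq> {-2<..<-1} \<times> (ball 0 1 \<times> ball 0 1)"
    and deriv: "\<And>z. (\<Phi> has_derivative \<Phi>' z) (at z)"
    and deriv_bound: "\<And>z u. norm (\<Phi>' z u) \<le> A1 * norm u"
    and coeff: "\<And>s. -2 < s/r \<Longrightarrow> s/r < -1 \<Longrightarrow> \<bar>c s\<bar> \<le> Kc" and "0 \<le> Kc"
  shows "grad_y_bound (Mop_kernel \<beta> r c \<Phi>) (Kc * A1 * (2 * (\<bar>\<beta>\<bar> + 1) * r powr (- \<beta>)))"
  unfolding grad_y_bound_def
proof (intro allI)
  fix s y w
  let ?G = "Kc * A1 * (2 * (\<bar>\<beta>\<bar> + 1) * r powr (- \<beta>))"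
  have "0 \<le> A1"
    using deriv_bound[of 0 "(1, 0)"] order_trans[OF norm_ge_zero] by (simp add: norm_Pair)
  then have "0 \<le> ?G"
    using \<open>0 \<le> Kc\<close> by simp
  show "\<exists>D. ((\<lambda>y'. Mop_kernel \<beta> r c \<Phi> s y' w) has_derivative D) (at y) \<and> onorm D \<le> ?G"
  proof (cases "s \<noteq> 0 \<and> -2 < s/r \<and> s/r < -1")
    case True
    let ?z = "(s/r, Mop \<beta> r s (y, w))"
    have "((\<lambda>y'. (s/r, Mop \<beta> r s (y', w))) has_derivative (\<lambda>h. (0, Mop \<beta> r s (h, 0)))) (at y)"
      by (intro has_derivative_Pair has_derivative_const has_derivative_Mop_fst)
    from has_derivative_compose[OF this deriv]
    have "((\<lambda>y'. Mop_kernel \<beta> r c \<Phi> s y' w) has_derivative (\<lambda>h. c s *\<^sub>R \<Phi>' ?z (0, Mop \<beta> r s (h, 0)))) (at y)"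
      using True by (simp add: Mop_kernel_def has_derivative_scaleR_right)
    moreover have "onorm (\<lambda>h. c s *\<^sub>R \<Phi>' ?z (0, Mop \<beta> r s (h, 0))) \<le> ?G"
    proof (rule onorm_le)
      fix h :: "real^'d"
      have "norm (c s *\<^sub>R \<Phi>' ?z (0, Mop \<beta> r s (h, 0))) \<le> Kc * (A1 * norm (Mop \<beta> r s (h, 0)))"
        using True coeff deriv_bound[of ?z "(0, Mop \<beta> r s (h, 0))"] \<open>0 \<le> Kc\<close>
        by (simp add: norm_Pair) (intro mult_mono; simp)
      also have "\<dots> \<le> Kc * (A1 * (2 * (\<bar>\<beta>\<bar> + 1) * r powr (- \<beta>) * norm h))"
        using norm_Mop_fst_le[OF assms(1)] True \<open>0 \<le> A1\<close> \<open>0 \<le> Kc\<close>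
        by (intro mult_left_mono) auto
      finally show "norm (c s *\<^sub>R \<Phi>' ?z (0, Mop \<beta> r s (h, 0))) \<le> ?G * norm h"
        by (simp add: mult.assoc)
    qed
    ultimately show ?thesis
      by blast
  next
    case False
    then have "Mop_kernel \<beta> r c \<Phi> s y' w = 0" for y'
      using box by (auto simp: Mop_kernel_def)
    then show ?thesis
      using \<open>0 \<le> ?G\<close> by (intro exI[of _ "\<lambda>_. 0"]) (simp add: onorm_zero)
  qed
qed

lemma grad_y_bound_mono: "grad_y_bound k B \<Longrightarrow> B \<le> B' \<Longrightarrow> grad_y_bound k B'"
  unfolding grad_y_bound_def by (meson order_trans)

lemma Mop_kernel_estimates:
  fixes \<Phi> :: "real \<times> ((real^'d) \<times> (real^'d)) \<Rightarrow> 'b::real_normed_vector"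
  assumes "r > 0" and box: "{z. \<Phi> z \<noteq> 0} \<subseteq> {-2<..<-1} \<times> (ball 0 1 \<times> ball 0 1)"
    and bound: "\<And>z. norm (\<Phi> z) \<le> A0"
    and deriv: "\<And>z. (\<Phi> has_derivative \<Phi>' z) (at z)"
    and deriv_bound: "\<And>z u. norm (\<Phi>' z u) \<le> A1 * norm u"
    and coeff: "\<And>s. -2 < s/r \<Longrightarrow> s/r < -1 \<Longrightarrow> \<bar>c s\<bar> \<le> K * r powr p" and "0 \<le> K"
    and C: "K * A0 \<le> C" "K * A1 * (2 * (\<bar>\<beta>\<bar> + 1)) \<le> C" and "p - \<beta> = q"
  shows "norm (Mop_kernel \<beta> r c \<Phi> s y w) \<le> C * r powr p"
    and "grad_y_bound (Mop_kernel \<beta> r c \<Phi>) (C * r powr q)"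
proof -
  have "norm (Mop_kernel \<beta> r c \<Phi> s y w) \<le> K * r powr p * A0"
    using \<open>0 \<le> K\<close> by (intro norm_Mop_kernel_le[OF box bound coeff]) simp_all
  also have "\<dots> \<le> C * r powr p"
    using mult_right_mono[OF C(1), of "r powr p"] by (simp add: mult_ac)
  finally show "norm (Mop_kernel \<beta> r c \<Phi> s y w) \<le> C * r powr p" .
  have grad: "grad_y_bound (Mop_kernel \<beta> r c \<Phi>) (K * r powr p * A1 * (2 * (\<bar>\<beta>\<bar> + 1) * r powr (- \<beta>)))"
    using \<open>0 \<le> K\<close> by (intro grad_y_bound_Mop_kernel[OF assms(1) box deriv deriv_bound coeff]) simp_all
  have "K * r powr p * A1 * (2 * (\<bar>\<beta>\<bar> + 1) * r powr (- \<beta>))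
      = K * A1 * (2 * (\<bar>\<beta>\<bar> + 1)) * (r powr p * r powr (- \<beta>))"
    by (simp only: mult_ac)
  also have "\<dots> = K * A1 * (2 * (\<bar>\<beta>\<bar> + 1)) * r powr q"
    using \<open>p - \<beta> = q\<close> by (simp add: powr_add[symmetric])
  also have "\<dots> \<le> C * r powr q"
    by (rule mult_right_mono[OF C(2)]) simp
  finally show "grad_y_bound (Mop_kernel \<beta> r c \<Phi>) (C * r powr q)"
    by (rule grad_y_bound_mono[OF grad])
qed

section \<open>Smooth functions with compact support\<close>

lemma iter_dderiv_trans: "iter_dderiv g h \<Longrightarrow> iter_dderiv f g \<Longrightarrow> iter_dderiv f h"
  by (induction rule: iter_dderiv.induct) (auto intro: iter_dderiv.step)

lemma smooth_fun_iter_dderiv: "smooth_fun f \<Longrightarrow> iter_dderiv f g \<Longrightarrow> smooth_fun g"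
  unfolding smooth_fun_def by (metis iter_dderiv_trans)

lemma smooth_fun_has_derivative:
  "smooth_fun f \<Longrightarrow> (f has_derivative frechet_derivative f (at x)) (at x)"
  unfolding smooth_fun_def frechet_derivative_works[symmetric] using iter_dderiv.base by blast

lemma smooth_fun_continuous: "smooth_fun f \<Longrightarrow> continuous_on UNIV f"
  unfolding smooth_fun_def using iter_dderiv.base by blast

lemma smooth_fun_frechet_derivative:
  "smooth_fun f \<Longrightarrow> smooth_fun (\<lambda>x. frechet_derivative f (at x) v)"
  by (erule smooth_fun_iter_dderiv) (rule iter_dderiv.step[OF iter_dderiv.base])

lemma frechet_derivative_eq_0_on_open:
  assumes "open U" "x \<in> U" "\<And>y. y \<in> U \<Longrightarrow> g y = 0"
  shows "frechet_derivative g (at x) = (\<lambda>_. 0)"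
proof -
  have "(g has_derivative (\<lambda>_. 0)) (at x)"
    by (rule has_derivative_transform_within_open[OF has_derivative_const assms(1,2)])
      (simp add: assms(3))
  then show ?thesis
    by (rule frechet_derivative_at[symmetric])
qed

lemma frechet_derivative_eq_0_outside_support:
  assumes "x \<notin> closure {z. f z \<noteq> 0}"
  shows "frechet_derivative f (at x) = (\<lambda>_. 0)"
  using assms closure_subset[of "{z. f z \<noteq> 0}"]
  by (intro frechet_derivative_eq_0_on_open[of "- closure {z. f z \<noteq> 0}"]) auto

lemma iter_dderiv_eq_0_outside_support:
  "iter_dderiv f g \<Longrightarrow> x \<notin> closure {z. f z \<noteq> 0} \<Longrightarrow> g x = 0"
proof (induction arbitrary: x rule: iter_dderiv.induct)
  case base
  then show ?case
    using closure_subset[of "{z. f z \<noteq> 0}"] by blast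
next
  case (step g v)
  have "frechet_derivative g (at x) = (\<lambda>_. 0)"
  proof (rule frechet_derivative_eq_0_on_open)
    show "open (- closure {z. f z \<noteq> 0})"
      by (simp add: open_Compl)
    show "x \<in> - closure {z. f z \<noteq> 0}"
      using step.prems by simp
    show "g y = 0" if "y \<in> - closure {z. f z \<noteq> 0}" for y
      using step.IH that by simp
  qed
  then show ?case
    by simp
qed

lemma compact_support_iter_dderiv:
  assumes "iter_dderiv f g" "compact (closure {x. f x \<noteq> 0})"
  shows "compact (closure {x. g x \<noteq> 0})"
proof -
  have "closure {x. g x \<noteq> 0} \<subseteq> closure {x. f x \<noteq> 0}"
    using iter_dderiv_eq_0_outside_support[OF assms(1)] by (intro closure_minimal) auto
  then show ?thesis
    using compact_Int_closed[OF assms(2), of "closure {x. g x \<noteq> 0}"] by (simp add: Int_absorb1)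
qed

lemma bounded_compact_support:
  assumes "continuous_on UNIV f" "compact (closure {x. f x \<noteq> 0})"
  shows "\<exists>B. \<forall>x. norm (f x) \<le> B"
proof -
  have "range f \<subseteq> insert 0 (f ` closure {x. f x \<noteq> 0})"
    using closure_subset by fastforce
  moreover have "compact (insert 0 (f ` closure {x. f x \<noteq> 0}))"
    using compact_continuous_image[OF continuous_on_subset[OF assms(1) subset_UNIV] assms(2)]
    by simp
  ultimately have "bounded (range f)"
    by (meson bounded_subset compact_imp_bounded)
  then show ?thesis
    by (auto simp: bounded_iff)
qed

lemma linear_eq_sum_Basis:
  fixes L :: "'a::euclidean_space \<Rightarrow> real"
  assumes "linear L"
  shows "L u = (\<Sum>e\<in>Basis. inner u e * L e)"
proof -
  have "L u = L (\<Sum>e\<in>Basis. inner u e *\<^sub>R e)"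
    by (simp only: euclidean_representation)
  also have "\<dots> = (\<Sum>e\<in>Basis. inner u e * L e)"
    using assms by (simp add: linear_sum linear_scale)
  finally show ?thesis .
qed

lemma abs_sum_Basis_le:
  fixes u :: "'a::euclidean_space"
  assumes "\<And>e. e \<in> Basis \<Longrightarrow> \<bar>a e\<bar> \<le> B e"
  shows "\<bar>\<Sum>e\<in>Basis. inner u e * a e\<bar> \<le> (\<Sum>e\<in>Basis. B e) * norm u"
proof -
  have "\<bar>\<Sum>e\<in>Basis. inner u e * a e\<bar> \<le> (\<Sum>e\<in>Basis. \<bar>inner u e * a e\<bar>)"
    by (rule sum_abs)
  also have "\<dots> \<le> (\<Sum>e\<in>Basis. norm u * B e)"
  proof (rule sum_mono)
    fix e :: 'a
    assume e: "e \<in> Basis"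
    show "\<bar>inner u e * a e\<bar> \<le> norm u * B e"
      unfolding abs_mult using Basis_le_norm[OF e, of u] assms[OF e] by (intro mult_mono) auto
  qed
  finally show ?thesis
    by (simp add: sum_distrib_left sum_distrib_right mult.commute)
qed

lemma smooth_fun_derivative_bound:
  fixes f :: "'a::euclidean_space \<Rightarrow> real"
  assumes "smooth_fun f" "compact (closure {x. f x \<noteq> 0})"
  shows "\<exists>B. \<forall>x u. \<bar>frechet_derivative f (at x) u\<bar> \<le> B * norm u"
proof -
  have "\<exists>B. \<forall>x. \<bar>frechet_derivative f (at x) e\<bar> \<le> B" for e
  proof -
    have g: "iter_dderiv f (\<lambda>x. frechet_derivative f (at x) e)"
      by (rule iter_dderiv.step[OF iter_dderiv.base])
    have "\<exists>B. \<forall>x. norm (frechet_derivative f (at x) e) \<le> B"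
      using smooth_fun_continuous[OF smooth_fun_iter_dderiv[OF assms(1) g]]
        compact_support_iter_dderiv[OF g assms(2)]
      by (rule bounded_compact_support)
    then show ?thesis
      by simp
  qed
  then have "\<forall>e. \<exists>B. \<forall>x. \<bar>frechet_derivative f (at x) e\<bar> \<le> B"
    by blast
  from choice[OF this] obtain B where B: "\<forall>e x. \<bar>frechet_derivative f (at x) e\<bar> \<le> B e"
    by blast
  have "\<bar>frechet_derivative f (at x) u\<bar> \<le> (\<Sum>e\<in>Basis. B e) * norm u" for x u
  proof -
    have "frechet_derivative f (at x) u = (\<Sum>e\<in>Basis. inner u e * frechet_derivative f (at x) e)"
      using smooth_fun_has_derivative[OF assms(1)] by (intro linear_eq_sum_Basis has_derivative_linear)
    also have "\<bar>\<dots>\<bar> \<le> (\<Sum>e\<in>Basis. B e) * norm u"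
      using B by (intro abs_sum_Basis_le) blast
    finally show ?thesis .
  qed
  then show ?thesis
    by blast
qed

lemma smooth_fun_second_derivative_bound:
  fixes f :: "'a::euclidean_space \<Rightarrow> real"
  assumes "smooth_fun f" "compact (closure {x. f x \<noteq> 0})"
  shows "\<exists>B. \<forall>x v h.
    \<bar>frechet_derivative (\<lambda>x. frechet_derivative f (at x) v) (at x) h\<bar> \<le> B * norm v * norm h"
proof -
  let ?g = "\<lambda>e x. frechet_derivative f (at x) e"
  have "\<forall>e. \<exists>B. \<forall>x h. \<bar>frechet_derivative (?g e) (at x) h\<bar> \<le> B * norm h"
  proof
    fix e
    have g: "iter_dderiv f (?g e)"
      by (rule iter_dderiv.step[OF iter_dderiv.base])
    show "\<exists>B. \<forall>x h. \<bar>frechet_derivative (?g e) (at x) h\<bar> \<le> B * norm h"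
      using smooth_fun_iter_dderiv[OF assms(1) g] compact_support_iter_dderiv[OF g assms(2)]
      by (rule smooth_fun_derivative_bound)
  qed
  from choice[OF this] obtain B where B: "\<forall>e x h. \<bar>frechet_derivative (?g e) (at x) h\<bar> \<le> B e * norm h"
    by blast
  have "\<bar>frechet_derivative (?g v) (at x) h\<bar> \<le> (\<Sum>e\<in>Basis. B e) * norm v * norm h" for x v h
  proof -
    have expand: "?g v = (\<lambda>x. \<Sum>e\<in>Basis. inner v e * ?g e x)"
      using smooth_fun_has_derivative[OF assms(1)] by (intro ext linear_eq_sum_Basis has_derivative_linear)
    have "((\<lambda>x. \<Sum>e\<in>Basis. inner v e * ?g e x) has_derivative
        (\<lambda>h. \<Sum>e\<in>Basis. inner v e * frechet_derivative (?g e) (at x) h)) (at x)"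
      using assms(1)
      by (intro has_derivative_sum has_derivative_mult_right smooth_fun_has_derivative
          smooth_fun_frechet_derivative)
    then have "frechet_derivative (?g v) (at x) h = (\<Sum>e\<in>Basis. inner v e * frechet_derivative (?g e) (at x) h)"
      by (simp only: expand frechet_derivative_at[symmetric])
    also have "\<bar>\<dots>\<bar> \<le> (\<Sum>e\<in>Basis. B e * norm h) * norm v"
      using B by (intro abs_sum_Basis_le) blast
    finally show ?thesis
      by (simp add: sum_distrib_right[symmetric] mult_ac)
  qed
  then show ?thesis
    by blast
qed

section \<open>The four kernels\<close>

lemma vec_lambda_eq_sum_axis: "(\<chi> j. a j) = (\<Sum>j\<in>UNIV. a j *\<^sub>R axis j (1::real))"
proof -
  have "(\<Sum>k\<in>UNIV. a k * (if j = k then 1 else 0)) = (\<Sum>k\<in>UNIV. if j = k then a k else 0)" for j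
    by (rule sum.cong) auto
  then show ?thesis
    by (simp add: vec_eq_iff axis_def)
qed

lemma has_derivative_vec_lambda:
  fixes f :: "'a::real_normed_vector \<Rightarrow> 'n::finite \<Rightarrow> real"
  assumes "\<And>j. ((\<lambda>x. f x j) has_derivative f' j) F"
  shows "((\<lambda>x. \<chi> j. f x j) has_derivative (\<lambda>h. \<chi> j. f' j h)) F"
  unfolding vec_lambda_eq_sum_axis by (intro has_derivative_sum has_derivative_scaleR_left assms)

lemma frechet_derivative_partial:
  assumes "(f has_derivative f') (at (t, q))"
  shows "frechet_derivative (\<lambda>q. f (t, q)) (at q) = (\<lambda>u. f' (0, u))"
proof -
  have "((\<lambda>q. (t, q)) has_derivative (\<lambda>u. (0, u))) (at q)"
    by (auto intro!: derivative_eq_intros)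
  from has_derivative_compose[OF this assms] show ?thesis
    by (rule frechet_derivative_at[symmetric])
qed

lemma abs_c0: "\<bar>c0 TYPE('d::finite)\<bar> = 1"
  by (simp add: c0_def power_abs)

lemma abs_c0_coeff_le:
  assumes "-2 < t" "t < -1"
  shows "\<bar>inverse (c0 TYPE('d::finite)) * t ^ n * r powr p\<bar> \<le> 2 ^ n * r powr p"
proof -
  have "\<bar>t\<bar> \<le> 2"
    using assms by arith
  then have "\<bar>inverse (c0 TYPE('d)) * t ^ n\<bar> * r powr p \<le> 2 ^ n * r powr p"
    by (intro mult_right_mono) (simp_all add: abs_mult abs_inverse abs_c0 power_abs power_mono)
  then show ?thesis
    by (simp add: abs_mult)
qed

locale bump_function =
  fixes \<psi> :: "real \<times> ((real^'d) \<times> (real^'d)) \<Rightarrow> real" and B0 B1 B2 :: real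
  assumes support_in_box: "closure {z. \<psi> z \<noteq> 0} \<subseteq> {-2<..<-1} \<times> (ball 0 1 \<times> ball 0 1)"
    and psi_has_derivative: "\<And>z. (\<psi> has_derivative frechet_derivative \<psi> (at z)) (at z)"
    and dpsi_has_derivative: "\<And>z v. ((\<lambda>z. frechet_derivative \<psi> (at z) v) has_derivative
      frechet_derivative (\<lambda>z. frechet_derivative \<psi> (at z) v) (at z)) (at z)"
    and psi_bound: "\<And>z. \<bar>\<psi> z\<bar> \<le> B0"
    and dpsi_bound: "\<And>z u. \<bar>frechet_derivative \<psi> (at z) u\<bar> \<le> B1 * norm u"
    and d2psi_bound: "\<And>z v h.
      \<bar>frechet_derivative (\<lambda>z. frechet_derivative \<psi> (at z) v) (at z) h\<bar> \<le> B2 * norm v * norm h"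
begin

lemma nonzero_in_box: "{z. \<psi> z \<noteq> 0} \<subseteq> {-2<..<-1} \<times> (ball 0 1 \<times> ball 0 1)"
  by (rule subset_trans[OF closure_subset support_in_box])

lemma bounds_nonneg: "0 \<le> B0" "0 \<le> B1" "0 \<le> B2"
  using psi_bound[of 0] dpsi_bound[of 0 "(1, 0)"] d2psi_bound[of "(1, 0)" 0 "(1, 0)"]
  by (simp_all add: norm_Pair)

lemma dpsi_eq_0: "z \<notin> closure {z. \<psi> z \<noteq> 0} \<Longrightarrow> frechet_derivative \<psi> (at z) u = 0"
  by (simp add: frechet_derivative_eq_0_outside_support)

text \<open>
  By Mop_snd, the w-column of M is (s/r) r^(1 - beta) (cos (ln r), -sin (ln r)), so the j-th entry
  of G0ker is a multiple of the derivative of psi in direction G0_direction (ln r) j.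
\<close>

definition G0_direction :: "real \<Rightarrow> 'd \<Rightarrow> real \<times> ((real^'d) \<times> (real^'d))" where
  "G0_direction \<theta> j = (0, (cos \<theta> *\<^sub>R axis j 1, - sin \<theta> *\<^sub>R axis j 1))"

definition G0_profile :: "real \<Rightarrow> real \<times> ((real^'d) \<times> (real^'d)) \<Rightarrow> real^'d" where
  "G0_profile \<theta> z = (\<chi> j. frechet_derivative \<psi> (at z) (G0_direction \<theta> j))"

lemma norm_G0_direction: "norm (G0_direction \<theta> j) = 1"
  by (simp add: G0_direction_def norm_Pair power_mult_distrib)

lemma G0_profile_nonzero_in_box: "{z. G0_profile \<theta> z \<noteq> 0} \<subseteq> {-2<..<-1} \<times> (ball 0 1 \<times> ball 0 1)"
proof -
  have "G0_profile \<theta> z = 0" if "z \<notin> closure {z. \<psi> z \<noteq> 0}" for z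
    using dpsi_eq_0[OF that] by (simp add: G0_profile_def vec_eq_iff)
  then have "{z. G0_profile \<theta> z \<noteq> 0} \<subseteq> closure {z. \<psi> z \<noteq> 0}"
    by blast
  then show ?thesis
    using support_in_box by (rule subset_trans)
qed

lemma norm_G0_profile_le: "norm (G0_profile \<theta> z) \<le> CARD('d) * B1"
proof -
  have "norm (G0_profile \<theta> z) \<le> (\<Sum>j\<in>UNIV. \<bar>G0_profile \<theta> z $ j\<bar>)"
    by (rule norm_le_l1_cart)
  also have "\<dots> \<le> (\<Sum>j\<in>(UNIV::'d set). B1)"
  proof (rule sum_mono)
    fix j
    show "\<bar>G0_profile \<theta> z $ j\<bar> \<le> B1"
      using dpsi_bound[of z "G0_direction \<theta> j"] by (simp add: G0_profile_def norm_G0_direction)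
  qed
  finally show ?thesis
    by simp
qed

lemma G0_profile_has_derivative:
  "(G0_profile \<theta> has_derivative (\<lambda>h. \<chi> j. frechet_derivative
      (\<lambda>z. frechet_derivative \<psi> (at z) (G0_direction \<theta> j)) (at z) h)) (at z)"
  unfolding G0_profile_def[abs_def] by (intro has_derivative_vec_lambda dpsi_has_derivative)

lemma norm_G0_profile_derivative_le:
  "norm (\<chi> j. frechet_derivative
      (\<lambda>z. frechet_derivative \<psi> (at z) (G0_direction \<theta> j)) (at z) h)
    \<le> CARD('d) * B2 * norm h"
proof -
  have "norm (\<chi> j. frechet_derivative
      (\<lambda>z. frechet_derivative \<psi> (at z) (G0_direction \<theta> j)) (at z) h)
    \<le> (\<Sum>j\<in>(UNIV::'d set). B2 * norm h)"
    using d2psi_bound[of "G0_direction \<theta> _" z h]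
    by (intro order_trans[OF norm_le_l1_cart] sum_mono) (simp add: norm_G0_direction)
  then show ?thesis
    by (simp add: mult.assoc)
qed

definition Gv_profile :: "real \<Rightarrow> real \<Rightarrow> real \<times> ((real^'d) \<times> (real^'d)) \<Rightarrow> real^'d" where
  "Gv_profile a b z = \<psi> z *\<^sub>R (a *\<^sub>R fst (snd z) + b *\<^sub>R snd (snd z))"

lemma Gv_profile_nonzero_in_box: "{z. Gv_profile a b z \<noteq> 0} \<subseteq> {-2<..<-1} \<times> (ball 0 1 \<times> ball 0 1)"
  using nonzero_in_box by (auto simp: Gv_profile_def)

lemma norm_Gv_profile_le: "norm (Gv_profile a b z) \<le> B0 * (\<bar>a\<bar> + \<bar>b\<bar>)"
proof (cases "\<psi> z = 0")
  case False
  then have "norm (fst (snd z)) \<le> 1" "norm (snd (snd z)) \<le> 1"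
    using nonzero_in_box by (auto simp: mem_Times_iff)
  then have "\<bar>\<psi> z\<bar> * norm (a *\<^sub>R fst (snd z) + b *\<^sub>R snd (snd z)) \<le> B0 * (\<bar>a\<bar> + \<bar>b\<bar>)"
    using psi_bound norm_scaleR_add_le bounds_nonneg by (intro mult_mono) auto
  then show ?thesis
    by (simp add: Gv_profile_def)
next
  case True
  then show ?thesis
    using bounds_nonneg by (simp add: Gv_profile_def)
qed

lemma Gv_profile_has_derivative:
  "(Gv_profile a b has_derivative (\<lambda>u. frechet_derivative \<psi> (at z) u *\<^sub>R (a *\<^sub>R fst (snd z) + b *\<^sub>R snd (snd z))
      + \<psi> z *\<^sub>R (a *\<^sub>R fst (snd u) + b *\<^sub>R snd (snd u)))) (at z)"
  unfolding Gv_profile_def[abs_def]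
  by (rule has_derivative_eq_rhs, intro derivative_eq_intros psi_has_derivative) (auto intro: psi_has_derivative)

lemma norm_Gv_profile_derivative_le:
  "norm (frechet_derivative \<psi> (at z) u *\<^sub>R (a *\<^sub>R fst (snd z) + b *\<^sub>R snd (snd z))
      + \<psi> z *\<^sub>R (a *\<^sub>R fst (snd u) + b *\<^sub>R snd (snd u))) \<le> (B0 + B1) * (\<bar>a\<bar> + \<bar>b\<bar>) * norm u"
proof (cases "z \<in> closure {z. \<psi> z \<noteq> 0}")
  case True
  then have z: "norm (fst (snd z)) \<le> 1" "norm (snd (snd z)) \<le> 1"
    using support_in_box by (auto simp: mem_Times_iff)
  have "norm (snd u) \<le> norm u"
    using norm_snd_le[of "snd u" "fst u"] by simp
  then have u: "norm (fst (snd u)) \<le> norm u" "norm (snd (snd u)) \<le> norm u"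
    using norm_fst_le[of "fst (snd u)" "snd (snd u)"] norm_snd_le[of "snd (snd u)" "fst (snd u)"]
    by simp_all
  have "norm (a *\<^sub>R fst (snd u) + b *\<^sub>R snd (snd u)) \<le> \<bar>a\<bar> * norm (fst (snd u)) + \<bar>b\<bar> * norm (snd (snd u))"
    using norm_triangle_ineq[of "a *\<^sub>R fst (snd u)" "b *\<^sub>R snd (snd u)"] by simp
  also have "\<dots> \<le> (\<bar>a\<bar> + \<bar>b\<bar>) * norm u"
    using u by (simp add: distrib_right add_mono mult_left_mono)
  finally have lin: "norm (a *\<^sub>R fst (snd u) + b *\<^sub>R snd (snd u)) \<le> (\<bar>a\<bar> + \<bar>b\<bar>) * norm u" .
  have "norm (frechet_derivative \<psi> (at z) u *\<^sub>R (a *\<^sub>R fst (snd z) + b *\<^sub>R snd (snd z))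
      + \<psi> z *\<^sub>R (a *\<^sub>R fst (snd u) + b *\<^sub>R snd (snd u)))
    \<le> \<bar>frechet_derivative \<psi> (at z) u\<bar> * norm (a *\<^sub>R fst (snd z) + b *\<^sub>R snd (snd z))
      + \<bar>\<psi> z\<bar> * norm (a *\<^sub>R fst (snd u) + b *\<^sub>R snd (snd u))"
    by (rule order_trans[OF norm_triangle_ineq]) simp
  also have "\<dots> \<le> (B1 * norm u) * (\<bar>a\<bar> + \<bar>b\<bar>) + B0 * ((\<bar>a\<bar> + \<bar>b\<bar>) * norm u)"
    using dpsi_bound[of z u] psi_bound[of z] norm_scaleR_add_le[OF z] lin bounds_nonneg
    by (intro add_mono mult_mono) auto
  finally show ?thesis
    by (simp add: algebra_simps)
next
  case False
  moreover have "\<psi> z = 0"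
    using False closure_subset[of "{z. \<psi> z \<noteq> 0}"] by blast
  ultimately show ?thesis
    using bounds_nonneg by (simp add: dpsi_eq_0)
qed

lemma Kker_eq:
  "Kker \<beta> \<psi> r = Mop_kernel \<beta> r
    (\<lambda>s. inverse (c0 TYPE('d)) * (s/r) ^ CARD('d) * r powr (- Qexp TYPE('d) \<beta>)) \<psi>"
  by (simp add: fun_eq_iff Kker_def Mop_kernel_def mult_ac)

lemma G1ker_eq:
  "G1ker \<beta> \<psi> r = Mop_kernel \<beta> r
    (\<lambda>s. - (inverse (c0 TYPE('d)) * (s/r) ^ (CARD('d) + 1) * r powr (- Qexp TYPE('d) \<beta>))) \<psi>"
  by (simp add: fun_eq_iff G1ker_def Mop_kernel_def)

lemma G0ker_eq:
  assumes "r > 0"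
  shows "G0ker \<beta> \<psi> r = Mop_kernel \<beta> r
    (\<lambda>s. inverse (c0 TYPE('d)) * (s/r) ^ (CARD('d) + 2) * r powr (1 - \<beta> - Qexp TYPE('d) \<beta>))
    (G0_profile (ln r))"
proof (intro ext)
  fix s y w
  show "G0ker \<beta> \<psi> r s y w = Mop_kernel \<beta> r
    (\<lambda>s. inverse (c0 TYPE('d)) * (s/r) ^ (CARD('d) + 2) * r powr (1 - \<beta> - Qexp TYPE('d) \<beta>))
    (G0_profile (ln r)) s y w"
  proof (cases "s = 0")
    case False
    let ?z = "(s/r, Mop \<beta> r s (y, w))" and ?k = "s/r * r powr (1 - \<beta>)"
    have dir: "(0, Mop \<beta> r s (0, axis j 1)) = ?k *\<^sub>R G0_direction (ln r) j" for j
      by (simp add: Mop_snd[OF assms False] G0_direction_def)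
    have "frechet_derivative (\<lambda>q. \<psi> (s/r, q)) (at (Mop \<beta> r s (y, w))) (Mop \<beta> r s (0, axis j 1))
        = ?k * frechet_derivative \<psi> (at ?z) (G0_direction (ln r) j)" for j
      unfolding frechet_derivative_partial[OF psi_has_derivative] dir
      using linear_cmul[OF has_derivative_linear[OF psi_has_derivative]] by simp
    moreover have "r powr (- Qexp TYPE('d) \<beta>) * r powr (1 - \<beta>) = r powr (1 - \<beta> - Qexp TYPE('d) \<beta>)"
      by (simp add: powr_add[symmetric])
    ultimately show ?thesis
      using False by (simp add: G0ker_def Mop_kernel_def G0_profile_def vec_eq_iff)
  qed (simp add: G0ker_def Mop_kernel_def)
qed

lemma Gvker_eq:
  assumes "r > 0"
  shows "Gvker \<beta> \<psi> r = Mop_kernel \<beta> r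
    (\<lambda>s. - (inverse (c0 TYPE('d)) * (s/r) ^ CARD('d) * r powr (\<beta> - 2 - Qexp TYPE('d) \<beta>)) / (s/r))
    (Gv_profile (r powr (2 - \<beta>) * deriv (deriv (g1 \<beta>)) r) (r powr (2 - \<beta>) * deriv (deriv (g2 \<beta>)) r))"
proof -
  have powr_Q: "r powr (2 - \<beta>) * (r powr (\<beta> - 2 - Qexp TYPE('d) \<beta>) * x) = r powr (- Qexp TYPE('d) \<beta>) * x"
    for x :: real
    by (simp add: mult.assoc[symmetric] powr_add[symmetric])
  show ?thesis
    by (simp add: fun_eq_iff Gvker_def Mop_kernel_def Gv_profile_def Fop_def scaleR_add_right
        divide_inverse mult_ac powr_Q)
qed

lemma ksupp_kernels:
  assumes "r > 0" "2 * (\<bar>\<beta>\<bar> + 1) \<le> C"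
  shows "ksupp (Kker \<beta> \<psi> r) \<union> ksupp (G0ker \<beta> \<psi> r) \<union> ksupp (G1ker \<beta> \<psi> r) \<union> ksupp (Gvker \<beta> \<psi> r)
    \<subseteq> {(s, y, w). -2*r \<le> s \<and> s \<le> -r \<and> norm y \<le> C * r powr \<beta> \<and> norm w \<le> C * r powr (\<beta> - 1)}"
  unfolding Kker_eq G0ker_eq[OF assms(1)] G1ker_eq Gvker_eq[OF assms(1)]
  by (intro Un_least ksupp_Mop_kernel[OF assms(1) _ assms(2)] nonzero_in_box
      G0_profile_nonzero_in_box Gv_profile_nonzero_in_box)

lemma Kker_estimates:
  assumes "r > 0" "2 ^ CARD('d) * B0 \<le> C" "2 ^ CARD('d) * B1 * (2 * (\<bar>\<beta>\<bar> + 1)) \<le> C"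
  shows "\<bar>Kker \<beta> \<psi> r s y w\<bar> \<le> C * r powr (- Qexp TYPE('d) \<beta>)"
    and "grad_y_bound (Kker \<beta> \<psi> r) (C * r powr (- \<beta> - Qexp TYPE('d) \<beta>))"
proof -
  have coeff: "\<bar>inverse (c0 TYPE('d)) * (s/r) ^ CARD('d) * r powr (- Qexp TYPE('d) \<beta>)\<bar>
      \<le> 2 ^ CARD('d) * r powr (- Qexp TYPE('d) \<beta>)" if "-2 < s/r" "s/r < -1" for s
    by (rule abs_c0_coeff_le[OF that])
  show "\<bar>Kker \<beta> \<psi> r s y w\<bar> \<le> C * r powr (- Qexp TYPE('d) \<beta>)"
    "grad_y_bound (Kker \<beta> \<psi> r) (C * r powr (- \<beta> - Qexp TYPE('d) \<beta>))"
    using Mop_kernel_estimates[where q = "- \<beta> - Qexp TYPE('d) \<beta>", OF assms(1) nonzero_in_box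
        psi_bound[folded real_norm_def] psi_has_derivative dpsi_bound[folded real_norm_def]
        coeff _ assms(2,3)]
    by (simp_all add: Kker_eq)
qed

lemma G1ker_estimates:
  assumes "r > 0" "2 ^ (CARD('d) + 1) * B0 \<le> C" "2 ^ (CARD('d) + 1) * B1 * (2 * (\<bar>\<beta>\<bar> + 1)) \<le> C"
  shows "\<bar>G1ker \<beta> \<psi> r s y w\<bar> \<le> C * r powr (- Qexp TYPE('d) \<beta>)"
    and "grad_y_bound (G1ker \<beta> \<psi> r) (C * r powr (- \<beta> - Qexp TYPE('d) \<beta>))"
proof -
  have coeff: "\<bar>- (inverse (c0 TYPE('d)) * (s/r) ^ (CARD('d) + 1) * r powr (- Qexp TYPE('d) \<beta>))\<bar>
      \<le> 2 ^ (CARD('d) + 1) * r powr (- Qexp TYPE('d) \<beta>)" if "-2 < s/r" "s/r < -1" for s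
    unfolding abs_minus_cancel by (rule abs_c0_coeff_le[OF that])
  show "\<bar>G1ker \<beta> \<psi> r s y w\<bar> \<le> C * r powr (- Qexp TYPE('d) \<beta>)"
    "grad_y_bound (G1ker \<beta> \<psi> r) (C * r powr (- \<beta> - Qexp TYPE('d) \<beta>))"
    using Mop_kernel_estimates[where q = "- \<beta> - Qexp TYPE('d) \<beta>", OF assms(1) nonzero_in_box
        psi_bound[folded real_norm_def] psi_has_derivative dpsi_bound[folded real_norm_def]
        coeff _ assms(2,3)]
    by (simp_all add: G1ker_eq)
qed

lemma G0ker_estimates:
  assumes "r > 0" "2 ^ (CARD('d) + 2) * (CARD('d) * B1) \<le> C"
    "2 ^ (CARD('d) + 2) * (CARD('d) * B2) * (2 * (\<bar>\<beta>\<bar> + 1)) \<le> C"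
  shows "norm (G0ker \<beta> \<psi> r s y w) \<le> C * r powr (1 - \<beta> - Qexp TYPE('d) \<beta>)"
    and "grad_y_bound (G0ker \<beta> \<psi> r) (C * r powr (1 - 2*\<beta> - Qexp TYPE('d) \<beta>))"
proof -
  have coeff: "\<bar>inverse (c0 TYPE('d)) * (s/r) ^ (CARD('d) + 2) * r powr (1 - \<beta> - Qexp TYPE('d) \<beta>)\<bar>
      \<le> 2 ^ (CARD('d) + 2) * r powr (1 - \<beta> - Qexp TYPE('d) \<beta>)" if "-2 < s/r" "s/r < -1" for s
    by (rule abs_c0_coeff_le[OF that])
  show "norm (G0ker \<beta> \<psi> r s y w) \<le> C * r powr (1 - \<beta> - Qexp TYPE('d) \<beta>)"
    "grad_y_bound (G0ker \<beta> \<psi> r) (C * r powr (1 - 2*\<beta> - Qexp TYPE('d) \<beta>))"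
    using Mop_kernel_estimates[where q = "1 - 2*\<beta> - Qexp TYPE('d) \<beta>", OF assms(1)
        G0_profile_nonzero_in_box norm_G0_profile_le G0_profile_has_derivative
        norm_G0_profile_derivative_le coeff _ assms(2)] assms(3)
    by (simp_all add: G0ker_eq[OF assms(1)] mult.assoc)
qed

lemma Gvker_estimates:
  assumes "r > 0" "2 ^ CARD('d) * (B0 * (2 * (\<bar>\<beta>\<bar> + 1) * (\<bar>\<beta> - 1\<bar> + 1))) \<le> C"
    "2 ^ CARD('d) * ((B0 + B1) * (2 * (\<bar>\<beta>\<bar> + 1) * (\<bar>\<beta> - 1\<bar> + 1))) * (2 * (\<bar>\<beta>\<bar> + 1)) \<le> C"
  shows "norm (Gvker \<beta> \<psi> r s y w) \<le> C * r powr (\<beta> - 2 - Qexp TYPE('d) \<beta>)"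
    and "grad_y_bound (Gvker \<beta> \<psi> r) (C * r powr (- 2 - Qexp TYPE('d) \<beta>))"
proof -
  let ?a = "r powr (2 - \<beta>) * deriv (deriv (g1 \<beta>)) r" and ?b = "r powr (2 - \<beta>) * deriv (deriv (g2 \<beta>)) r"
  let ?L = "2 * (\<bar>\<beta>\<bar> + 1) * (\<bar>\<beta> - 1\<bar> + 1)"
  have ab: "\<bar>?a\<bar> + \<bar>?b\<bar> \<le> ?L"
    using add_mono[OF abs_deriv_deriv_g_le[OF assms(1), of \<beta>]] by (simp only: mult_2 distrib_right)
  have bound: "norm (Gv_profile ?a ?b z) \<le> B0 * ?L" for z
    using norm_Gv_profile_le[of ?a ?b z] mult_left_mono[OF ab, of B0] bounds_nonneg by linarith
  have deriv_bound: "norm (frechet_derivative \<psi> (at z) u *\<^sub>R (?a *\<^sub>R fst (snd z) + ?b *\<^sub>R snd (snd z))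
      + \<psi> z *\<^sub>R (?a *\<^sub>R fst (snd u) + ?b *\<^sub>R snd (snd u))) \<le> (B0 + B1) * ?L * norm u" for z u
    using norm_Gv_profile_derivative_le[of z u ?a ?b] bounds_nonneg
      mult_right_mono[OF mult_left_mono[OF ab, of "B0 + B1"], of "norm u"]
    by simp
  have coeff: "\<bar>- (inverse (c0 TYPE('d)) * (s/r) ^ CARD('d) * r powr (\<beta> - 2 - Qexp TYPE('d) \<beta>)) / (s/r)\<bar>
      \<le> 2 ^ CARD('d) * r powr (\<beta> - 2 - Qexp TYPE('d) \<beta>)" if "-2 < s/r" "s/r < -1" for s
  proof -
    let ?c = "inverse (c0 TYPE('d)) * (s/r) ^ CARD('d) * r powr (\<beta> - 2 - Qexp TYPE('d) \<beta>)"
    have "1 \<le> \<bar>s/r\<bar>"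
      using that by arith
    then have "\<bar>- ?c / (s/r)\<bar> \<le> \<bar>- ?c\<bar>"
      using divide_left_mono[OF \<open>1 \<le> \<bar>s/r\<bar>\<close> abs_ge_zero[of "- ?c"]] by (simp add: abs_divide abs_mult)
    also have "\<dots> \<le> 2 ^ CARD('d) * r powr (\<beta> - 2 - Qexp TYPE('d) \<beta>)"
      unfolding abs_minus_cancel by (rule abs_c0_coeff_le[OF that])
    finally show ?thesis .
  qed
  show "norm (Gvker \<beta> \<psi> r s y w) \<le> C * r powr (\<beta> - 2 - Qexp TYPE('d) \<beta>)"
    "grad_y_bound (Gvker \<beta> \<psi> r) (C * r powr (- 2 - Qexp TYPE('d) \<beta>))"
    using Mop_kernel_estimates[where q = "- 2 - Qexp TYPE('d) \<beta>", OF assms(1) Gv_profile_nonzero_in_box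
        bound Gv_profile_has_derivative deriv_bound coeff _ _ assms(3)] assms(2)
    by (simp_all add: Gvker_eq[OF assms(1)] mult.assoc)
qed

end

theorem lemma2p5:
  fixes \<psi> :: "real \<times> ((real^'d) \<times> (real^'d)) \<Rightarrow> real" and \<beta> :: real
  assumes "\<beta> > 1"
    and "smooth_fun \<psi>"
    and "compact (closure {z. \<psi> z \<noteq> 0})"
    and "\<forall>z. \<psi> z \<ge> 0"
    and "(\<psi> has_integral 1) UNIV"
    and "closure {z. \<psi> z \<noteq> 0} \<subseteq> {-2<..<-1} \<times> (ball 0 1 \<times> ball 0 1)"
  shows "\<exists>C>0. \<forall>r>0.
      ksupp (Kker \<beta> \<psi> r) \<union> ksupp (G0ker \<beta> \<psi> r) \<union> ksupp (G1ker \<beta> \<psi> r) \<union> ksupp (Gvker \<beta> \<psi> r)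
        \<subseteq> {(s, y, w). -2*r \<le> s \<and> s \<le> -r \<and> norm y \<le> C * r powr \<beta> \<and> norm w \<le> C * r powr (\<beta> - 1)}
    \<and> (\<forall>s y w. \<bar>Kker \<beta> \<psi> r s y w\<bar> \<le> C * r powr (- Qexp TYPE('d) \<beta>))
    \<and> grad_y_bound (Kker \<beta> \<psi> r) (C * r powr (- \<beta> - Qexp TYPE('d) \<beta>))
    \<and> (\<forall>s y w. norm (G0ker \<beta> \<psi> r s y w) \<le> C * r powr (1 - \<beta> - Qexp TYPE('d) \<beta>))
    \<and> grad_y_bound (G0ker \<beta> \<psi> r) (C * r powr (1 - 2*\<beta> - Qexp TYPE('d) \<beta>))
    \<and> (\<forall>s y w. \<bar>G1ker \<beta> \<psi> r s y w\<bar> \<le> C * r powr (- Qexp TYPE('d) \<beta>))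
    \<and> grad_y_bound (G1ker \<beta> \<psi> r) (C * r powr (- \<beta> - Qexp TYPE('d) \<beta>))
    \<and> (\<forall>s y w. norm (Gvker \<beta> \<psi> r s y w) \<le> C * r powr (\<beta> - 2 - Qexp TYPE('d) \<beta>))
    \<and> grad_y_bound (Gvker \<beta> \<psi> r) (C * r powr (- 2 - Qexp TYPE('d) \<beta>))"
proof -
  obtain B0 where "\<forall>z. norm (\<psi> z) \<le> B0"
    using bounded_compact_support[OF smooth_fun_continuous[OF assms(2)] assms(3)] by blast
  moreover obtain B1 where "\<forall>z u. \<bar>frechet_derivative \<psi> (at z) u\<bar> \<le> B1 * norm u"
    using smooth_fun_derivative_bound[OF assms(2,3)] by blast
  moreover obtain B2 where "\<forall>z v h.
      \<bar>frechet_derivative (\<lambda>z. frechet_derivative \<psi> (at z) v) (at z) h\<bar> \<le> B2 * norm v * norm h"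
    using smooth_fun_second_derivative_bound[OF assms(2,3)] by blast
  ultimately interpret bump_function \<psi> B0 B1 B2
    using assms(2,6) by unfold_locales (auto intro: smooth_fun_has_derivative smooth_fun_frechet_derivative)
  let ?n = "CARD('d)" and ?K = "2 * (\<bar>\<beta>\<bar> + 1)" and ?L = "2 * (\<bar>\<beta>\<bar> + 1) * (\<bar>\<beta> - 1\<bar> + 1)"
  define C where "C = Max {?K, 2 ^ ?n * B0, 2 ^ ?n * B1 * ?K, 2 ^ (?n + 1) * B0, 2 ^ (?n + 1) * B1 * ?K,
    2 ^ (?n + 2) * (?n * B1), 2 ^ (?n + 2) * (?n * B2) * ?K, 2 ^ ?n * (B0 * ?L), 2 ^ ?n * ((B0 + B1) * ?L) * ?K}"
  have C: "?K \<le> C" "2 ^ ?n * B0 \<le> C" "2 ^ ?n * B1 * ?K \<le> C" "2 ^ (?n + 1) * B0 \<le> C"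
    "2 ^ (?n + 1) * B1 * ?K \<le> C" "2 ^ (?n + 2) * (?n * B1) \<le> C" "2 ^ (?n + 2) * (?n * B2) * ?K \<le> C"
    "2 ^ ?n * (B0 * ?L) \<le> C" "2 ^ ?n * ((B0 + B1) * ?L) * ?K \<le> C"
    unfolding C_def by (rule Max_ge; simp)+
  have "C > 0"
    using C(1) abs_ge_zero[of \<beta>] by (smt (verit))
  then show ?thesis
    using ksupp_kernels[OF _ C(1)] Kker_estimates[OF _ C(2,3)] G1ker_estimates[OF _ C(4,5)]
      G0ker_estimates[OF _ C(6,7)] Gvker_estimates[OF _ C(8,9)]
    by (intro exI[of _ C]) simp
qed

end
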